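(* Let $\mathbf p:\mathbb R^{n\times k}\to\mathbb R^n$ be a permutation equivariant polynomial map. Then there exists a polynomial $p:\mathbb R^{n\times k}\to\mathbb R$ that is invariant under all permutations of the last $n-1$ rows of $\mathbf X$ such that $\mathbf p=\lceil p\rceil$, i.e. $\mathbf p(\mathbf X)=(p(\mathbf X),p(\sigma\cdot\mathbf X),p(\sigma^2\cdot\mathbf X),\dots,p(\sigma^{n-1}\cdot\mathbf X))^T$ for all $\mathbf X$, where $\sigma\in S_n$ is the permutation with $\sigma^{-1}=(1\,2\,3\cdots n)$.
   Context: $\mathbf X=(\mathbf x_1,\dots,\mathbf x_n)^T\in\mathbb R^{n\times k}$; $S_n$ acts by $\sigma\cdot\mathbf X=(\mathbf x_{\sigma^{-1}(1)},\dots,\mathbf x_{\sigma^{-1}(n)})^T$, and on vectors in $\mathbb R^n$ by the same permutation of entries; $\mathbf p$ is permutation equivariant if $\mathbf p(\sigma\cdot\mathbf X)=\sigma\cdot\mathbf p(\mathbf X)$ for all $\sigma\in S_n$. *)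

theory Defs
  imports Complex_Main "HOL-Combinatorics.Permutations"
begin

text \<open>Matrices X in R^(n x k) are represented as functions nat => nat => real,
  X i j being the entry in row i < n, column j < k (rows/columns are 0-indexed).\<close>

inductive poly_fun :: "nat \<Rightarrow> nat \<Rightarrow> ((nat \<Rightarrow> nat \<Rightarrow> real) \<Rightarrow> real) \<Rightarrow> bool"
  for n k where
  const: "poly_fun n k (\<lambda>X. c)"
| coord: "i < n \<Longrightarrow> j < k \<Longrightarrow> poly_fun n k (\<lambda>X. X i j)"
| add: "poly_fun n k f \<Longrightarrow> poly_fun n k g \<Longrightarrow> poly_fun n k (\<lambda>X. f X + g X)"
| mult: "poly_fun n k f \<Longrightarrow> poly_fun n k g \<Longrightarrow> poly_fun n k (\<lambda>X. f X * g X)"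

definition act_rows :: "(nat \<Rightarrow> nat) \<Rightarrow> (nat \<Rightarrow> nat \<Rightarrow> real) \<Rightarrow> (nat \<Rightarrow> nat \<Rightarrow> real)" where
  "act_rows \<sigma> X = (\<lambda>i j. X (inv \<sigma> i) j)"

definition poly_map :: "nat \<Rightarrow> nat \<Rightarrow> ((nat \<Rightarrow> nat \<Rightarrow> real) \<Rightarrow> nat \<Rightarrow> real) \<Rightarrow> bool" where
  "poly_map n k P \<longleftrightarrow> (\<forall>i<n. poly_fun n k (\<lambda>X. P X i))"

definition perm_equivariant :: "nat \<Rightarrow> ((nat \<Rightarrow> nat \<Rightarrow> real) \<Rightarrow> nat \<Rightarrow> real) \<Rightarrow> bool" where
  "perm_equivariant n P \<longleftrightarrow>
     (\<forall>\<sigma> X. \<sigma> permutes {..<n} \<longrightarrow> (\<forall>i<n. P (act_rows \<sigma> X) i = P X (inv \<sigma> i)))"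

text \<open>The n-cycle (1 2 ... n), 0-indexed: i |-> (i+1) mod n on {0..<n}, identity elsewhere.\<close>
definition ncycle :: "nat \<Rightarrow> nat \<Rightarrow> nat" where
  "ncycle n i = (if i < n then Suc i mod n else i)"

definition sigma_shift :: "nat \<Rightarrow> nat \<Rightarrow> nat" where
  "sigma_shift n = inv (ncycle n)"

end

theory Submission
  imports Defs "HOL-Combinatorics.Cycles"
begin

text \<open>Equivariance says that \<open>\<sigma>\<close> carries component \<open>i\<close> of \<open>P X\<close> to component \<open>\<sigma> i\<close> of
  \<open>P (\<sigma> \<cdot> X)\<close>. Hence the first component \<open>p X = P X 0\<close> is invariant under the stabiliser of
  row 0, and since \<open>\<sigma>\<^sup>i\<close> maps row \<open>i\<close> to row 0, every component is \<open>P X i = p (\<sigma>\<^sup>i \<cdot> X)\<close>.\<close>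

lemma ncycle_permutes: "ncycle n permutes {..<n}"
proof (rule bij_imp_permutes)
  show "x \<notin> {..<n} \<Longrightarrow> ncycle n x = x" for x
    by (simp add: ncycle_def)
  have "inj_on (ncycle n) {..<n}"
    by (rule inj_onI) (auto simp: ncycle_def mod_Suc split: if_splits)
  moreover have "ncycle n ` {..<n} \<subseteq> {..<n}"
    by (auto simp: ncycle_def)
  ultimately show "bij_betw (ncycle n) {..<n} {..<n}"
    by (simp add: bij_betw_def endo_inj_surj)
qed

lemma sigma_shift_permutes: "sigma_shift n permutes {..<n}"
  unfolding sigma_shift_def by (rule permutes_inv[OF ncycle_permutes])

lemma sigma_shift_Suc: "Suc i < n \<Longrightarrow> sigma_shift n (Suc i) = i"
  unfolding sigma_shift_def by (simp add: permutes_inv_eq[OF ncycle_permutes] ncycle_def)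

lemma funpow_sigma_shift_self: "i < n \<Longrightarrow> (sigma_shift n ^^ i) i = 0"
proof (induction i)
  case 0
  then show ?case by simp
next
  case (Suc i)
  then show ?case
    by (simp only: funpow_Suc_right comp_def sigma_shift_Suc)
qed

lemma perm_equivariant_apply:
  assumes "perm_equivariant n P" and "\<sigma> permutes {..<n}" and "i < n"
  shows "P (act_rows \<sigma> X) (\<sigma> i) = P X i"
proof -
  have "\<sigma> i < n"
    using assms(2,3) by (metis lessThan_iff permutes_in_image)
  then show ?thesis
    using assms(1,2) by (simp add: perm_equivariant_def permutes_inverses)
qed

theorem lemma1:
  fixes n k :: nat and P :: "(nat \<Rightarrow> nat \<Rightarrow> real) \<Rightarrow> nat \<Rightarrow> real"
  assumes "poly_map n k P" and "perm_equivariant n P"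
  shows "\<exists>p. poly_fun n k p
           \<and> (\<forall>\<tau> X. \<tau> permutes {1..<n} \<longrightarrow> p (act_rows \<tau> X) = p X)
           \<and> (\<forall>X. \<forall>i<n. P X i = p (act_rows (sigma_shift n ^^ i) X))"
proof (cases "n = 0")
  case True
  then show ?thesis
    by (intro exI[of _ "\<lambda>X. 0"]) (auto intro: poly_fun.const)
next
  case False
  show ?thesis
  proof (intro exI[of _ "\<lambda>X. P X 0"] conjI allI impI)
    show "poly_fun n k (\<lambda>X. P X 0)"
      using assms(1) False by (simp add: poly_map_def)
  next
    fix \<tau> X assume "\<tau> permutes {1..<n}"
    then have "\<tau> permutes {..<n}" and "\<tau> 0 = 0"
      by (auto intro: permutes_subset permutes_not_in)
    then show "P (act_rows \<tau> X) 0 = P X 0"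
      using perm_equivariant_apply[OF assms(2)] False by fastforce
  next
    fix X i assume "i < n"
    then show "P X i = P (act_rows (sigma_shift n ^^ i) X) 0"
      using perm_equivariant_apply[OF assms(2) permutes_funpow[OF sigma_shift_permutes]]
      by (metis funpow_sigma_shift_self)
  qed
qed

end
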